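(* Let $d\ge1$ be an integer and $0<\lambda<1$. Let $\mathbf{v}(\cdot)=\{v_k(\cdot)\}_{k\ge0}$ be a solution, with $v_0(t)\equiv1$, of the differential system \[\frac{d}{dt}v_k(t)=\lambda(v_{k-1}(t)-v_k(t))-(1-v_{k+1}(t))^d+(1-v_{k}(t))^d,\qquad k=1,2,\dots\] with initial state $\mathbf{v}(0)\in U_o$. Then $\lim_{t\to\infty}v_k(t)=v^*_k$ for every $k=1,2,\dots$.
   Context: $U$ is the set of sequences $\mathbf{u}=\{u_k\}_{k\ge0}$ with $1=u_0\ge u_1\ge u_2\ge\cdots\ge 0$, and $U_o=\{\mathbf{u}\in U:\sum_{k\ge1}u_k<\infty\}$. The sequence $\mathbf{v}^*=\{v^*_k\}_{k\ge0}$ is defined by $v^*_0=1$ and $v^*_k=1-\sqrt[d]{1-\lambda v^*_{k-1}}$ for $k=1,2,\dots$. *)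

theory Defs
  imports "HOL-Analysis.Analysis"
begin

definition seqU :: "(nat \<Rightarrow> real) set" where
  "seqU = {u. u 0 = 1 \<and> (\<forall>k. u (Suc k) \<le> u k) \<and> (\<forall>k. 0 \<le> u k)}"

definition seqUo :: "(nat \<Rightarrow> real) set" where
  "seqUo = {u \<in> seqU. summable (\<lambda>k. u (Suc k))}"

fun vstar :: "nat \<Rightarrow> real \<Rightarrow> nat \<Rightarrow> real" where
  "vstar d lam 0 = 1"
| "vstar d lam (Suc k) = 1 - root d (1 - lam * vstar d lam k)"

end

theory Submission
  imports Defs
begin

text \<open>
  Write \<open>e\<^sub>k = v\<^sub>k - v\<^sup>*\<^sub>k\<close>. The fixed-point relation \<open>(1 - v\<^sup>*\<^sub>k\<^sub>+\<^sub>1)\<^sup>d = 1 - \<lambda> v\<^sup>*\<^sub>k\<close> turns the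
  system into \<open>e\<^sub>k' = \<lambda>(e\<^sub>k\<^sub>-\<^sub>1 - e\<^sub>k) + h\<^sub>k\<^sub>+\<^sub>1 - h\<^sub>k\<close> with
  \<open>h\<^sub>k = (1 - v\<^sup>*\<^sub>k)\<^sup>d - (1 - v\<^sub>k)\<^sup>d\<close>, and \<open>h\<^sub>k\<close> has the sign of \<open>e\<^sub>k\<close>. Hence
  \<open>|e\<^sub>k|' \<le> \<lambda>|e\<^sub>k\<^sub>-\<^sub>1| - \<lambda>|e\<^sub>k| - |h\<^sub>k| + |h\<^sub>k\<^sub>+\<^sub>1|\<close>. Summing over \<open>k > i\<close> telescopes; the tail
  vanishes because the mass \<open>\<Sum>\<^sub>k v\<^sub>k(t)\<close> grows at most linearly, and one gets
  \<open>\<integral>\<^sub>0\<^sup>t |h\<^sub>i\<^sub>+\<^sub>1| \<le> C + \<lambda> \<integral>\<^sub>0\<^sup>t |e\<^sub>i|\<close>. As \<open>|h\<^sub>i\<^sub>+\<^sub>1| \<ge> (1 - v\<^sup>*\<^sub>i\<^sub>+\<^sub>1)\<^sup>d\<^sup>-\<^sup>1 |e\<^sub>i\<^sub>+\<^sub>1|\<close>, induction on \<open>i\<close>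
  shows that every \<open>|e\<^sub>k|\<close> is integrable on \<open>[0,\<infinity>)\<close>; being Lipschitz in \<open>t\<close>, it tends to 0.
\<close>

lemma has_real_derivative_increment_le:
  fixes F G :: "real \<Rightarrow> real"
  assumes "a \<le> b"
    and F: "\<And>x. a \<le> x \<Longrightarrow> x \<le> b \<Longrightarrow> (F has_real_derivative F' x) (at x within {a..b})"
    and G: "\<And>x. a \<le> x \<Longrightarrow> x \<le> b \<Longrightarrow> (G has_real_derivative G' x) (at x within {a..b})"
    and le: "\<And>x. a \<le> x \<Longrightarrow> x \<le> b \<Longrightarrow> F' x \<le> G' x"
  shows "F b - F a \<le> G b - G a"
proof -
  have "\<exists>x\<in>{a..b}. (\<lambda>x. F x - G x) b - (\<lambda>x. F x - G x) a = (\<lambda>h. (F' x - G' x) * h) (b - a)"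
  proof (rule mvt_very_simple[OF \<open>a \<le> b\<close>])
    fix x assume "a \<le> x" "x \<le> b"
    then have "((\<lambda>x. F x - G x) has_real_derivative (F' x - G' x)) (at x within {a..b})"
      using F G by (intro DERIV_diff) auto
    then show "((\<lambda>x. F x - G x) has_derivative (\<lambda>h. (F' x - G' x) * h)) (at x within {a..b})"
      by (simp add: has_field_derivative_def)
  qed
  then obtain x where x: "x \<in> {a..b}" "F b - G b - (F a - G a) = (F' x - G' x) * (b - a)"
    by auto
  have "(F' x - G' x) * (b - a) \<le> 0"
    using le[of x] x(1) \<open>a \<le> b\<close> by (intro mult_nonpos_nonneg) auto
  then show ?thesis using x(2) by linarith
qed

lemma continuous_on_atLeast_integrable:
  fixes f :: "real \<Rightarrow> real"
  shows "continuous_on {a..} f \<Longrightarrow> a \<le> x \<Longrightarrow> f integrable_on {x..y}"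
  by (rule integrable_continuous_interval, erule continuous_on_subset) auto

lemma abs_power_diff_le:
  fixes x y :: real
  assumes "0 \<le> x" "x \<le> 1" "0 \<le> y" "y \<le> 1"
  shows "\<bar>x ^ n - y ^ n\<bar> \<le> real n * \<bar>x - y\<bar>"
proof (induction n)
  case (Suc n)
  have "x ^ Suc n - y ^ Suc n = x * (x ^ n - y ^ n) + y ^ n * (x - y)"
    by (simp add: algebra_simps)
  moreover have "\<bar>x * (x ^ n - y ^ n)\<bar> \<le> \<bar>x ^ n - y ^ n\<bar>"
    using assms by (simp add: abs_mult mult_left_le_one_le)
  moreover have "\<bar>y ^ n * (x - y)\<bar> \<le> \<bar>x - y\<bar>"
    using assms by (simp add: abs_mult mult_left_le_one_le power_le_one)
  ultimately show ?case using Suc by (simp add: algebra_simps)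
qed simp

lemma abs_power_diff_ge:
  fixes x y :: real
  assumes "0 \<le> x" "0 \<le> y"
  shows "y ^ n * \<bar>x - y\<bar> \<le> \<bar>x ^ Suc n - y ^ Suc n\<bar>"
proof (cases "y \<le> x")
  case True
  then have "y ^ n \<le> x ^ n" using assms by (intro power_mono) auto
  then have "x * y ^ n \<le> x * x ^ n" using assms by (intro mult_left_mono) auto
  then show ?thesis using True by (simp add: algebra_simps)
next
  case False
  then have "x ^ n \<le> y ^ n" using assms by (intro power_mono) auto
  then have "x * x ^ n \<le> x * y ^ n" using assms by (intro mult_left_mono) auto
  then show ?thesis using False by (simp add: algebra_simps)
qed

subsection \<open>A smoothed absolute value\<close>

lemma smoothed_sign:
  fixes e \<epsilon> :: real
  assumes "0 < \<epsilon>"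
  defines "s \<equiv> e / sqrt (e\<^sup>2 + \<epsilon>\<^sup>2)"
  shows "\<bar>s\<bar> \<le> 1"
    and "(1 - \<bar>s\<bar>) * \<bar>e\<bar> \<le> \<epsilon>"
    and "0 \<le> e * h \<Longrightarrow> s * h = \<bar>s\<bar> * \<bar>h\<bar>"
proof -
  define S where "S = sqrt (e\<^sup>2 + \<epsilon>\<^sup>2)"
  have "0 < S" unfolding S_def using assms(1) by (simp add: add_nonneg_pos)
  have "\<bar>e\<bar> \<le> S" unfolding S_def by (simp add: real_le_rsqrt)
  have "S \<le> \<bar>e\<bar> + \<epsilon>"
    unfolding S_def using sqrt_add_le_add_sqrt[of "e\<^sup>2" "\<epsilon>\<^sup>2"] assms(1) by simp
  show "\<bar>s\<bar> \<le> 1"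
    unfolding s_def S_def[symmetric] using \<open>0 < S\<close> \<open>\<bar>e\<bar> \<le> S\<close> by (simp add: abs_div)
  then have "(1 - \<bar>s\<bar>) * \<bar>e\<bar> \<le> (1 - \<bar>s\<bar>) * S"
    using \<open>\<bar>e\<bar> \<le> S\<close> by (intro mult_left_mono) auto
  also have "\<dots> = S - \<bar>e\<bar>"
    unfolding s_def S_def[symmetric] using \<open>0 < S\<close> by (simp add: abs_div algebra_simps)
  finally show "(1 - \<bar>s\<bar>) * \<bar>e\<bar> \<le> \<epsilon>" using \<open>S \<le> \<bar>e\<bar> + \<epsilon>\<close> by linarith
  show "s * h = \<bar>s\<bar> * \<bar>h\<bar>" if "0 \<le> e * h"
    unfolding s_def S_def[symmetric] using \<open>0 < S\<close> that
    by (simp add: abs_div abs_mult[symmetric] times_divide_eq_left)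
qed

text \<open>
  The left-hand side is the derivative of \<open>sqrt (e\<^sup>2 + \<epsilon>\<^sup>2)\<close> when \<open>e' = \<lambda>(e\<^sub>0 - e) + h\<^sub>0 - h\<close>.
\<close>
lemma smoothed_sign_mult_le:
  fixes e e\<^sub>0 h h\<^sub>0 lam D \<epsilon> :: real
  assumes "0 < \<epsilon>" "0 \<le> lam" "0 \<le> D" "0 \<le> e * h" "\<bar>h\<bar> \<le> D * \<bar>e\<bar>"
  shows "e * (lam * (e\<^sub>0 - e) + h\<^sub>0 - h) / sqrt (e\<^sup>2 + \<epsilon>\<^sup>2)
           \<le> lam * \<bar>e\<^sub>0\<bar> - lam * \<bar>e\<bar> - \<bar>h\<bar> + \<bar>h\<^sub>0\<bar> + (lam + D) * \<epsilon>"
proof -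
  define s where "s = e / sqrt (e\<^sup>2 + \<epsilon>\<^sup>2)"
  have s1: "\<bar>s\<bar> \<le> 1" and defect: "(1 - \<bar>s\<bar>) * \<bar>e\<bar> \<le> \<epsilon>"
    and se: "s * e = \<bar>s\<bar> * \<bar>e\<bar>" and sh: "s * h = \<bar>s\<bar> * \<bar>h\<bar>"
    unfolding s_def using smoothed_sign[OF assms(1)] assms(4) by (auto simp: zero_le_square)
  have "s * (lam * e\<^sub>0) \<le> \<bar>s\<bar> * (lam * \<bar>e\<^sub>0\<bar>)"
    using assms(2) by (metis abs_ge_self abs_mult abs_of_nonneg)
  moreover have "\<bar>s\<bar> * (lam * \<bar>e\<^sub>0\<bar>) \<le> lam * \<bar>e\<^sub>0\<bar>"
    using s1 assms(2) by (simp add: mult_left_le_one_le)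
  moreover have "s * h\<^sub>0 \<le> \<bar>s\<bar> * \<bar>h\<^sub>0\<bar>"
    by (metis abs_ge_self abs_mult)
  moreover have "\<bar>s\<bar> * \<bar>h\<^sub>0\<bar> \<le> \<bar>h\<^sub>0\<bar>"
    using s1 by (simp add: mult_left_le_one_le)
  moreover have "(1 - \<bar>s\<bar>) * \<bar>h\<bar> \<le> (1 - \<bar>s\<bar>) * (D * \<bar>e\<bar>)"
    using s1 assms(5) by (intro mult_left_mono) auto
  moreover have "(lam + D) * ((1 - \<bar>s\<bar>) * \<bar>e\<bar>) \<le> (lam + D) * \<epsilon>"
    using defect assms(2,3) by (intro mult_left_mono) auto
  moreover have "e * (lam * (e\<^sub>0 - e) + h\<^sub>0 - h) / sqrt (e\<^sup>2 + \<epsilon>\<^sup>2)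
      = s * (lam * e\<^sub>0) + s * h\<^sub>0 - (lam * (s * e) + s * h)"
    unfolding s_def using \<open>0 < \<epsilon>\<close> by (simp add: add_nonneg_pos field_simps)
  moreover have "\<dots> = s * (lam * e\<^sub>0) + s * h\<^sub>0 - \<bar>s\<bar> * (lam * \<bar>e\<bar> + \<bar>h\<bar>)"
    using se sh by (simp add: algebra_simps)
  ultimately show ?thesis by (simp add: algebra_simps)
qed

text \<open>
  \<open>|e|\<close> need not be differentiable, so the comparison is made for \<open>sqrt (e\<^sup>2 + \<epsilon>\<^sup>2)\<close>, and
  \<open>\<epsilon> \<rightarrow> 0\<close> afterwards.
\<close>
lemma abs_increment_le_integral:
  fixes e e' \<phi> :: "real \<Rightarrow> real"
  assumes "0 \<le> t"
    and e: "\<And>x. 0 \<le> x \<Longrightarrow> x \<le> t \<Longrightarrow> (e has_real_derivative e' x) (at x within {0..t})"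
    and \<phi>: "continuous_on {0..t} \<phi>"
    and bound: "\<And>\<epsilon> x. 0 < \<epsilon> \<Longrightarrow> 0 \<le> x \<Longrightarrow> x \<le> t \<Longrightarrow>
                  e x * e' x / sqrt ((e x)\<^sup>2 + \<epsilon>\<^sup>2) \<le> \<phi> x + C * \<epsilon>"
  shows "\<bar>e t\<bar> - \<bar>e 0\<bar> \<le> integral {0..t} \<phi>"
proof (rule field_le_epsilon)
  fix \<delta> :: real assume "0 < \<delta>"
  define \<epsilon> where "\<epsilon> = \<delta> / (\<bar>C\<bar> * t + 1)"
  have "0 < \<bar>C\<bar> * t + 1" using \<open>0 \<le> t\<close> by (simp add: add_nonneg_pos)
  then have "0 < \<epsilon>" and \<epsilon>: "\<bar>C\<bar> * t * \<epsilon> = \<delta> - \<epsilon>"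
    unfolding \<epsilon>_def using \<open>0 < \<delta>\<close> by (simp_all add: field_simps)
  define F where "F s = sqrt ((e s)\<^sup>2 + \<epsilon>\<^sup>2)" for s
  define G where "G s = integral {0..s} \<phi> + C * \<epsilon> * s" for s
  have DF: "(F has_real_derivative e x * e' x / sqrt ((e x)\<^sup>2 + \<epsilon>\<^sup>2)) (at x within {0..t})"
    if "0 \<le> x" "x \<le> t" for x
  proof -
    have "0 < (e x)\<^sup>2 + \<epsilon>\<^sup>2" using \<open>0 < \<epsilon>\<close> by (simp add: add_nonneg_pos)
    then show ?thesis
      unfolding F_def using e[OF that] by (auto intro!: derivative_eq_intros simp: field_simps)
  qed
  have DG: "(G has_real_derivative \<phi> x + C * \<epsilon>) (at x within {0..t})"
    if "0 \<le> x" "x \<le> t" for x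
    unfolding G_def using integral_has_real_derivative[OF \<phi>, of x] that
    by (auto intro!: derivative_eq_intros)
  have "F t - F 0 \<le> G t - G 0"
    by (rule has_real_derivative_increment_le[OF \<open>0 \<le> t\<close> DF DG bound[OF \<open>0 < \<epsilon>\<close>]])
  moreover have "\<bar>e t\<bar> \<le> F t"
    unfolding F_def by (simp add: real_le_rsqrt)
  moreover have "F 0 \<le> \<bar>e 0\<bar> + \<epsilon>"
    unfolding F_def using sqrt_add_le_add_sqrt[of "(e 0)\<^sup>2" "\<epsilon>\<^sup>2"] \<open>0 < \<epsilon>\<close> by simp
  moreover have "C * \<epsilon> * t \<le> \<delta> - \<epsilon>"
  proof -
    have "C * (t * \<epsilon>) \<le> \<bar>C\<bar> * (t * \<epsilon>)"
      using \<open>0 \<le> t\<close> \<open>0 < \<epsilon>\<close> by (intro mult_right_mono) auto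
    then have "C * \<epsilon> * t \<le> \<bar>C\<bar> * t * \<epsilon>"
      by (simp add: ac_simps)
    then show ?thesis using \<epsilon> by simp
  qed
  ultimately show "\<bar>e t\<bar> - \<bar>e 0\<bar> \<le> integral {0..t} \<phi> + \<delta>"
    unfolding G_def by simp
qed

subsection \<open>Lipschitz functions with bounded integral\<close>

lemma lipschitz_integral_ge:
  fixes f :: "real \<Rightarrow> real"
  assumes "0 < L" "0 \<le> \<epsilon>" "0 \<le> t" "\<epsilon> \<le> f t"
    and lip: "L-lipschitz_on {0..} f"
    and "f integrable_on {t..t + \<epsilon> / (2 * L)}"
  shows "\<epsilon>\<^sup>2 / (4 * L) \<le> integral {t..t + \<epsilon> / (2 * L)} f"
proof -
  have "integral {t..t + \<epsilon> / (2 * L)} (\<lambda>s. \<epsilon> / 2) \<le> integral {t..t + \<epsilon> / (2 * L)} f"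
  proof (rule integral_le)
    fix s assume s: "s \<in> {t..t + \<epsilon> / (2 * L)}"
    then have "L * \<bar>s - t\<bar> \<le> L * (\<epsilon> / (2 * L))"
      using \<open>0 < L\<close> by (intro mult_left_mono) auto
    then show "\<epsilon> / 2 \<le> f s"
      using lipschitz_on_normD[OF lip, of s t] s \<open>0 \<le> t\<close> \<open>\<epsilon> \<le> f t\<close> \<open>0 < L\<close> by auto
  qed (use assms in auto)
  then show ?thesis
    using assms(1,2) by (simp add: power2_eq_square)
qed

lemma tendsto_zero_if_lipschitz_integral_bounded:
  fixes f :: "real \<Rightarrow> real"
  assumes "0 < L"
    and nonneg: "\<And>s. 0 \<le> s \<Longrightarrow> 0 \<le> f s"
    and lip: "L-lipschitz_on {0..} f"
    and bounded: "\<And>t. 0 \<le> t \<Longrightarrow> integral {0..t} f \<le> B"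
  shows "(f \<longlongrightarrow> 0) at_top"
  unfolding tendsto_iff
proof (intro allI impI)
  fix \<epsilon> :: real assume "0 < \<epsilon>"
  have integrable: "f integrable_on {x..y}" if "0 \<le> x" for x y
    using continuous_on_atLeast_integrable[OF lipschitz_on_continuous_on[OF lip] that] .
  show "\<forall>\<^sub>F t in at_top. dist (f t) 0 < \<epsilon>"
  proof (rule ccontr)
    assume "\<not> (\<forall>\<^sub>F t in at_top. dist (f t) 0 < \<epsilon>)"
    then have large: "\<exists>t\<ge>T. \<epsilon> \<le> f t" if "0 \<le> T" for T
      unfolding eventually_at_top_linorder using nonneg that
      by (metis dist_real_def diff_zero abs_of_nonneg not_less order_trans)
    define w where "w = \<epsilon> / (2 * L)"
    define \<delta> where "\<delta> = \<epsilon>\<^sup>2 / (4 * L)"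
    have "0 < w" "0 < \<delta>" unfolding w_def \<delta>_def using \<open>0 < \<epsilon>\<close> \<open>0 < L\<close> by auto
    have grow: "\<exists>T\<ge>0. real n * \<delta> \<le> integral {0..T} f" for n
    proof (induction n)
      case (Suc n)
      then obtain T where T: "0 \<le> T" "real n * \<delta> \<le> integral {0..T} f" by blast
      obtain t where t: "T \<le> t" "\<epsilon> \<le> f t" using large[OF T(1)] by blast
      have "integral {0..T} f + integral {T..t} f = integral {0..t} f"
        "integral {0..t} f + integral {t..t + w} f = integral {0..t + w} f"
        using T t \<open>0 < w\<close> by (auto intro!: Henstock_Kurzweil_Integration.integral_combine integrable)
      moreover have "0 \<le> integral {T..t} f"
        using T t by (intro integral_nonneg integrable nonneg) auto
      moreover have "\<delta> \<le> integral {t..t + w} f"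
        unfolding \<delta>_def w_def using T t \<open>0 < L\<close> \<open>0 < \<epsilon>\<close>
        by (intro lipschitz_integral_ge lip integrable) auto
      ultimately have "real (Suc n) * \<delta> \<le> integral {0..t + w} f"
        using T by (simp add: algebra_simps)
      then show ?case using T t \<open>0 < w\<close> by (intro exI[of _ "t + w"]) auto
    qed auto
    obtain n where "B < real n * \<delta>" using ex_less_of_nat_mult[OF \<open>0 < \<delta>\<close>] by blast
    then show False using grow[of n] bounded by force
  qed
qed

lemma vstar_nonneg_le_power:
  assumes "0 < d" "0 \<le> lam" "lam \<le> 1"
  shows "0 \<le> vstar d lam j \<and> vstar d lam j \<le> lam ^ j"
proof (induction j)
  case (Suc j)
  let ?y = "1 - lam * vstar d lam j"
  have "lam * vstar d lam j \<le> 1"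
    using Suc assms power_le_one[of lam j] by (intro mult_le_one) auto
  then have "0 \<le> ?y" "?y \<le> 1" using Suc assms by auto
  then have "?y \<le> root d ?y" "root d ?y \<le> 1"
    using real_root_increasing[of 1 d ?y] assms(1) by auto
  then have "0 \<le> vstar d lam (Suc j)" "vstar d lam (Suc j) \<le> lam * vstar d lam j"
    by auto
  moreover have "lam * vstar d lam j \<le> lam * lam ^ j"
    using Suc assms(2) by (intro mult_left_mono) auto
  ultimately show ?case by simp
qed simp

lemma vstar_fixed_point:
  assumes "0 < d" "0 \<le> lam" "lam \<le> 1"
  shows "(1 - vstar d lam (Suc j)) ^ d = 1 - lam * vstar d lam j"
proof -
  have "lam * vstar d lam j \<le> 1"
    using vstar_nonneg_le_power[OF assms, of j] assms power_le_one[of lam j]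
    by (intro mult_le_one) auto
  then show ?thesis using assms(1) by simp
qed

subsection \<open>Solutions of the system\<close>

text \<open>\<open>v\<^sup>*\<^sub>k\<^sub>+\<^sub>1\<close> is used only through \<open>vstar_fixed_point\<close>, never unfolded into a root.\<close>
declare vstar.simps(2) [simp del]

locale mean_field_solution =
  fixes d :: nat and lam :: real and v :: "real \<Rightarrow> nat \<Rightarrow> real"
  assumes d_ge_1: "d \<ge> 1" and lam_pos: "0 < lam" and lam_less_1: "lam < 1"
    and v_zero: "\<And>t. t \<ge> 0 \<Longrightarrow> v t 0 = 1"
    and v_in_seqU: "\<And>t. t \<ge> 0 \<Longrightarrow> v t \<in> seqU"
    and v_deriv: "\<And>t k. t \<ge> 0 \<Longrightarrow> k \<ge> 1 \<Longrightarrow>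
           ((\<lambda>s. v s k) has_real_derivative
              (lam * (v t (k - 1) - v t k) - (1 - v t (k + 1)) ^ d + (1 - v t k) ^ d))
           (at t within {0..})"
    and v_initial: "v 0 \<in> seqUo"
begin

abbreviation vs :: "nat \<Rightarrow> real" where "vs \<equiv> vstar d lam"

definition drift :: "real \<Rightarrow> nat \<Rightarrow> real" where
  "drift t k = lam * (v t (k - 1) - v t k) - (1 - v t (k + 1)) ^ d + (1 - v t k) ^ d"

definition dev :: "real \<Rightarrow> nat \<Rightarrow> real" where
  "dev t j = \<bar>v t j - vs j\<bar>"

definition pdev :: "real \<Rightarrow> nat \<Rightarrow> real" where
  "pdev t j = (1 - vs j) ^ d - (1 - v t j) ^ d"

definition dev_rate :: "nat \<Rightarrow> real \<Rightarrow> real" where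
  "dev_rate i t = lam * dev t i - lam * dev t (Suc i) - \<bar>pdev t (Suc i)\<bar> + \<bar>pdev t (Suc (Suc i))\<bar>"

definition mass0 :: real where
  "mass0 = (\<Sum>k. v 0 (Suc k))"

lemma v_nonneg: "t \<ge> 0 \<Longrightarrow> 0 \<le> v t k"
  using v_in_seqU unfolding seqU_def by auto

lemma v_antimono: "t \<ge> 0 \<Longrightarrow> i \<le> j \<Longrightarrow> v t j \<le> v t i"
  using v_in_seqU unfolding seqU_def by (auto intro: lift_Suc_antimono_le[of "v t"])

lemma v_le_one: "t \<ge> 0 \<Longrightarrow> v t k \<le> 1"
  using v_antimono[of t 0 k] v_zero[of t] by simp

lemma one_minus_v_power_bounds: "t \<ge> 0 \<Longrightarrow> 0 \<le> (1 - v t j) ^ d \<and> (1 - v t j) ^ d \<le> 1"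
  using v_nonneg[of t j] v_le_one[of t j] by (simp add: power_le_one)

lemma partial_mass_initial_le: "(\<Sum>k<N. v 0 (Suc k)) \<le> mass0"
  unfolding mass0_def using v_initial v_nonneg[of 0] unfolding seqUo_def
  by (intro sum_le_suminf) auto

lemma vs_nonneg: "0 \<le> vs j" and vs_le_power: "vs j \<le> lam ^ j"
  using vstar_nonneg_le_power[of d lam j] d_ge_1 lam_pos lam_less_1 by auto

lemma vs_le_one: "vs j \<le> 1"
  using vs_le_power[of j] power_le_one[of lam j] lam_pos lam_less_1 by simp

lemma vs_Suc_less_one: "vs (Suc j) < 1"
proof -
  have "lam ^ Suc j \<le> lam"
    using lam_pos lam_less_1 by (simp add: mult_left_le_one_le power_le_one)
  then show ?thesis using vs_le_power[of "Suc j"] lam_less_1 by simp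
qed

lemma drift_Suc_eq:
  "drift t (Suc i)
     = lam * ((v t i - vs i) - (v t (Suc i) - vs (Suc i))) + pdev t (Suc (Suc i)) - pdev t (Suc i)"
  using vstar_fixed_point[of d lam i] vstar_fixed_point[of d lam "Suc i"] d_ge_1 lam_pos lam_less_1
  unfolding drift_def pdev_def by (simp add: algebra_simps)

lemma drift_sum_eq:
  "t \<ge> 0 \<Longrightarrow> (\<Sum>k<N. drift t (Suc k)) = lam * (1 - v t N) + (1 - v t 1) ^ d - (1 - v t (Suc N)) ^ d"
  by (induction N) (simp_all add: drift_def v_zero algebra_simps)

lemma abs_drift_le:
  assumes "t \<ge> 0"
  shows "\<bar>drift t k\<bar> \<le> lam + 1"
proof -
  have "\<bar>v t (k - 1) - v t k\<bar> \<le> 1"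
    using v_nonneg[OF assms, of k] v_le_one[OF assms, of k]
      v_nonneg[OF assms, of "k - 1"] v_le_one[OF assms, of "k - 1"]
    by (simp add: abs_le_iff)
  then have "\<bar>lam * (v t (k - 1) - v t k)\<bar> \<le> lam"
    using lam_pos by (simp add: abs_mult mult_left_le_one_le)
  then show ?thesis
    using one_minus_v_power_bounds[OF assms, of k] one_minus_v_power_bounds[OF assms, of "k + 1"]
    unfolding drift_def abs_le_iff by linarith
qed

lemma v_has_derivative:
  "t \<ge> 0 \<Longrightarrow> k \<ge> 1 \<Longrightarrow> ((\<lambda>s. v s k) has_real_derivative drift t k) (at t within {0..})"
  unfolding drift_def by (rule v_deriv)

lemma v_lipschitz: "(lam + 1)-lipschitz_on {0..} (\<lambda>s. v s k)"
proof (cases "k = 0")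
  case True
  then show ?thesis using v_zero lam_pos by (intro lipschitz_onI) auto
next
  case False
  then have "norm (v x k - v y k) \<le> (lam + 1) * norm (x - y)" if "0 \<le> x" "0 \<le> y" for x y
    by (intro field_differentiable_bound[of "{0..}" "\<lambda>s. v s k" "\<lambda>t. drift t k"])
      (use that v_has_derivative abs_drift_le in auto)
  then show ?thesis using lam_pos by (intro lipschitz_onI) (auto simp: dist_norm)
qed

lemma v_continuous [continuous_intros]: "continuous_on {0..} (\<lambda>s. v s k)"
  using v_lipschitz by (rule lipschitz_on_continuous_on)

lemma dev_continuous [continuous_intros]: "continuous_on {0..} (\<lambda>s. dev s j)"
  unfolding dev_def by (intro continuous_intros)

lemma pdev_continuous [continuous_intros]: "continuous_on {0..} (\<lambda>s. pdev s j)"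
  unfolding pdev_def by (intro continuous_intros)

lemma dev_rate_continuous [continuous_intros]: "continuous_on {0..} (dev_rate i)"
  unfolding dev_rate_def by (intro continuous_intros)

lemma dev_lipschitz: "(lam + 1)-lipschitz_on {0..} (\<lambda>s. dev s k)"
proof (rule lipschitz_onI)
  fix x y :: real assume "x \<in> {0..}" "y \<in> {0..}"
  then have "\<bar>v x k - v y k\<bar> \<le> (lam + 1) * \<bar>x - y\<bar>"
    using lipschitz_on_normD[OF v_lipschitz] by simp
  then show "dist (dev x k) (dev y k) \<le> (lam + 1) * dist x y"
    unfolding dev_def dist_real_def using abs_triangle_ineq3[of "v x k - vs k" "v y k - vs k"]
    by simp
qed (use lam_pos in simp)

lemma pdev_sign: "t \<ge> 0 \<Longrightarrow> 0 \<le> (v t j - vs j) * pdev t j"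
  using power_mono[of "1 - v t j" "1 - vs j" d] power_mono[of "1 - vs j" "1 - v t j" d]
    v_le_one[of t j] vs_le_one[of j]
  unfolding pdev_def by (cases "vs j \<le> v t j") (auto simp: mult_nonpos_nonpos)

lemma abs_pdev_le: "t \<ge> 0 \<Longrightarrow> \<bar>pdev t j\<bar> \<le> d * dev t j"
  using abs_power_diff_le[of "1 - vs j" "1 - v t j" d] vs_nonneg[of j] vs_le_one[of j]
    v_nonneg[of t j] v_le_one[of t j]
  unfolding pdev_def dev_def by (simp add: abs_minus_commute)

lemma abs_pdev_ge: "t \<ge> 0 \<Longrightarrow> (1 - vs j) ^ (d - 1) * dev t j \<le> \<bar>pdev t j\<bar>"
  using abs_power_diff_ge[of "1 - v t j" "1 - vs j" "d - 1"] vs_le_one[of j] v_le_one[of t j]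
    d_ge_1
  unfolding pdev_def dev_def by (simp add: abs_minus_commute)

lemma dev_Suc_increment_le:
  assumes "t \<ge> 0"
  shows "dev t (Suc i) - dev 0 (Suc i) \<le> integral {0..t} (dev_rate i)"
  unfolding dev_def
proof (rule abs_increment_le_integral[where e' = "\<lambda>s. drift s (Suc i)" and C = "lam + d"])
  show "continuous_on {0..t} (dev_rate i)"
    using dev_rate_continuous by (rule continuous_on_subset) auto
next
  fix x :: real assume "0 \<le> x" "x \<le> t"
  have "((\<lambda>s. v s (Suc i)) has_real_derivative drift x (Suc i)) (at x within {0..t})"
    by (rule has_field_derivative_subset[OF v_has_derivative]) (use \<open>0 \<le> x\<close> in auto)
  then show "((\<lambda>s. v s (Suc i) - vs (Suc i)) has_real_derivative drift x (Suc i)) (at x within {0..t})"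
    using DERIV_diff[OF _ DERIV_const[of "vs (Suc i)"]] by fastforce
next
  fix \<epsilon> x :: real assume "0 < \<epsilon>" "0 \<le> x" "x \<le> t"
  show "(v x (Suc i) - vs (Suc i)) * drift x (Suc i) / sqrt ((v x (Suc i) - vs (Suc i))\<^sup>2 + \<epsilon>\<^sup>2)
      \<le> dev_rate i x + (lam + d) * \<epsilon>"
    using smoothed_sign_mult_le[OF \<open>0 < \<epsilon>\<close>, of lam d "v x (Suc i) - vs (Suc i)" "pdev x (Suc i)"
        "v x i - vs i" "pdev x (Suc (Suc i))"]
      lam_pos pdev_sign[of x "Suc i"] abs_pdev_le[of x "Suc i"] \<open>0 \<le> x\<close>
    unfolding drift_Suc_eq dev_rate_def dev_def by simp
qed fact

lemma dev_rate_sum: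
  "(\<Sum>m\<le>n. dev_rate (i + m) s)
     = lam * dev s i - lam * dev s (Suc (i + n)) - \<bar>pdev s (Suc i)\<bar> + \<bar>pdev s (Suc (Suc (i + n)))\<bar>"
  by (induction n) (simp_all add: dev_rate_def)

lemma dev_sum_increment_le:
  assumes "t \<ge> 0"
  shows "(\<Sum>m\<le>n. dev t (Suc (i + m)) - dev 0 (Suc (i + m)))
           \<le> integral {0..t} (\<lambda>s. \<Sum>m\<le>n. dev_rate (i + m) s)"
proof -
  have "(\<Sum>m\<le>n. dev t (Suc (i + m)) - dev 0 (Suc (i + m))) \<le> (\<Sum>m\<le>n. integral {0..t} (dev_rate (i + m)))"
    using dev_Suc_increment_le[OF assms] by (intro sum_mono) auto
  also have "\<dots> = integral {0..t} (\<lambda>s. \<Sum>m\<le>n. dev_rate (i + m) s)"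
    by (rule integral_sum[symmetric])
      (auto intro: continuous_on_atLeast_integrable[OF dev_rate_continuous])
  finally show ?thesis .
qed

lemma partial_mass_le:
  assumes "t \<ge> 0"
  shows "(\<Sum>k<N. v t (Suc k)) \<le> mass0 + (lam + 1) * t"
proof -
  have "((\<lambda>s. \<Sum>k<N. v s (Suc k)) has_real_derivative (\<Sum>k<N. drift x (Suc k))) (at x within {0..})"
    if "x \<in> {0..}" for x
    using that by (intro DERIV_sum v_has_derivative) auto
  moreover have "norm (\<Sum>k<N. drift x (Suc k)) \<le> lam + 1" if "x \<in> {0..}" for x
  proof -
    have "0 \<le> lam * (1 - v x N)" "lam * (1 - v x N) \<le> lam"
      using that v_nonneg[of x N] v_le_one[of x N] lam_pos by (simp_all add: mult_left_le_one_le)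
    moreover have "(\<Sum>k<N. drift x (Suc k)) = lam * (1 - v x N) + (1 - v x 1) ^ d - (1 - v x (Suc N)) ^ d"
      using that drift_sum_eq by simp
    ultimately have "- (lam + 1) \<le> (\<Sum>k<N. drift x (Suc k))" "(\<Sum>k<N. drift x (Suc k)) \<le> lam + 1"
      using that one_minus_v_power_bounds[of x 1] one_minus_v_power_bounds[of x "Suc N"]
      by auto
    then show ?thesis by (simp add: abs_le_iff)
  qed
  ultimately have "norm ((\<Sum>k<N. v t (Suc k)) - (\<Sum>k<N. v 0 (Suc k))) \<le> (lam + 1) * norm (t - 0)"
    by (rule field_differentiable_bound[OF convex_real_interval(1)]) (use assms in auto)
  then show ?thesis using assms partial_mass_initial_le[of N] by simp
qed

lemma dev_le_tail:
  assumes "0 \<le> s" "s \<le> t" "n < j"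
  shows "dev s j \<le> (mass0 + (lam + 1) * t) / Suc n + lam ^ n"
proof -
  have "real (Suc n) * v s j \<le> (\<Sum>k<Suc n. v s (Suc k))"
    using sum_mono[of "{..<Suc n}" "\<lambda>_. v s j" "\<lambda>k. v s (Suc k)"] v_antimono[OF assms(1)] assms(3)
    by simp
  also have "\<dots> \<le> mass0 + (lam + 1) * s"
    using partial_mass_le[OF assms(1)] .
  also have "\<dots> \<le> mass0 + (lam + 1) * t"
    using assms(2) lam_pos by simp
  finally have "v s j \<le> (mass0 + (lam + 1) * t) / Suc n"
    by (simp add: field_simps)
  moreover have "lam ^ j \<le> lam ^ n"
    using assms(3) lam_pos lam_less_1 by (intro power_decreasing) auto
  then have "vs j \<le> lam ^ n"
    using vs_le_power[of j] by simp
  ultimately show ?thesis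
    unfolding dev_def using v_nonneg[OF assms(1), of j] vs_nonneg[of j] by (simp add: abs_le_iff)
qed

lemma initial_dev_sum_le: "(\<Sum>m\<le>n. dev 0 (Suc (i + m))) \<le> mass0 + 1 / (1 - lam)"
proof -
  have "dev 0 (Suc (i + m)) \<le> v 0 (Suc m) + lam ^ m" for m
  proof -
    have "lam ^ Suc (i + m) \<le> lam ^ m"
      using lam_pos lam_less_1 by (intro power_decreasing) auto
    then show ?thesis
      unfolding dev_def abs_le_iff using v_antimono[of 0 "Suc m" "Suc (i + m)"]
        v_nonneg[of 0 "Suc m"] v_nonneg[of 0 "Suc (i + m)"]
        vs_nonneg[of "Suc (i + m)"] vs_le_power[of "Suc (i + m)"]
      by simp
  qed
  then have "(\<Sum>m\<le>n. dev 0 (Suc (i + m))) \<le> (\<Sum>m<Suc n. v 0 (Suc m)) + (\<Sum>m<Suc n. lam ^ m)"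
    unfolding lessThan_Suc_atMost sum.distrib[symmetric] by (rule sum_mono)
  also have "(\<Sum>m<Suc n. v 0 (Suc m)) \<le> mass0"
    by (rule partial_mass_initial_le)
  also have "(\<Sum>m<Suc n. lam ^ m) \<le> 1 / (1 - lam)"
    using sum_le_suminf[OF summable_geometric, of lam "{..<Suc n}"] suminf_geometric[of lam]
      lam_pos lam_less_1 by simp
  finally show ?thesis by simp
qed

text \<open>
  Summing the differential inequalities for \<open>|e\<^sub>i\<^sub>+\<^sub>1|, \<dots>, |e\<^sub>i\<^sub>+\<^sub>n\<^sub>+\<^sub>1|\<close> leaves only the boundary
  terms; the one at the far end is small for large \<open>n\<close>.
\<close>
lemma abs_pdev_integral_le_telescoped:
  assumes "t \<ge> 0"
  shows "integral {0..t} (\<lambda>s. \<bar>pdev s (Suc i)\<bar>)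
           \<le> mass0 + 1 / (1 - lam) + lam * integral {0..t} (\<lambda>s. dev s i)
              + t * (d * ((mass0 + (lam + 1) * t) / Suc n + lam ^ n))"
proof -
  define \<psi> where "\<psi> s = lam * dev s i - \<bar>pdev s (Suc i)\<bar>" for s
  define c where "c = d * ((mass0 + (lam + 1) * t) / Suc n + lam ^ n)"
  have integrable: "f integrable_on {0..t}" if "continuous_on {0..} f" for f :: "real \<Rightarrow> real"
    using continuous_on_atLeast_integrable[OF that] by simp
  have \<psi>_integrable: "\<psi> integrable_on {0..t}"
    unfolding \<psi>_def by (intro integrable continuous_intros)
  have "0 \<le> (\<Sum>m\<le>n. dev t (Suc (i + m)))"
    by (simp add: sum_nonneg dev_def)
  then have "- (mass0 + 1 / (1 - lam)) \<le> (\<Sum>m\<le>n. dev t (Suc (i + m)) - dev 0 (Suc (i + m)))"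
    using initial_dev_sum_le[of i n] by (simp add: sum_subtractf)
  also have "\<dots> \<le> integral {0..t} (\<lambda>s. \<Sum>m\<le>n. dev_rate (i + m) s)"
    by (rule dev_sum_increment_le[OF assms])
  also have "\<dots> \<le> integral {0..t} (\<lambda>s. \<psi> s + c)"
  proof (rule integral_le)
    show "(\<lambda>s. \<Sum>m\<le>n. dev_rate (i + m) s) integrable_on {0..t}"
      by (intro integrable continuous_intros)
    show "(\<lambda>s. \<psi> s + c) integrable_on {0..t}"
      using \<psi>_integrable by (intro integrable_add integrable_const_ivl)
    fix s assume s: "s \<in> {0..t}"
    have "dev s (Suc (Suc (i + n))) \<le> (mass0 + (lam + 1) * t) / Suc n + lam ^ n"
      using s by (intro dev_le_tail) auto
    then have "d * dev s (Suc (Suc (i + n))) \<le> c"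
      unfolding c_def by (rule mult_left_mono) simp
    then have "\<bar>pdev s (Suc (Suc (i + n)))\<bar> \<le> c"
      using abs_pdev_le[of s "Suc (Suc (i + n))"] s by simp
    moreover have "0 \<le> lam * dev s (Suc (i + n))"
      using lam_pos by (simp add: dev_def)
    ultimately show "(\<Sum>m\<le>n. dev_rate (i + m) s) \<le> \<psi> s + c"
      unfolding dev_rate_sum \<psi>_def by linarith
  qed
  also have "\<dots> = integral {0..t} \<psi> + t * c"
    using \<psi>_integrable assms by (subst integral_add) auto
  also have "integral {0..t} \<psi>
      = lam * integral {0..t} (\<lambda>s. dev s i) - integral {0..t} (\<lambda>s. \<bar>pdev s (Suc i)\<bar>)"
    unfolding \<psi>_def by (subst integral_diff) (auto intro!: integrable continuous_intros)
  finally show ?thesis unfolding c_def by simp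
qed

lemma abs_pdev_integral_le:
  assumes "t \<ge> 0"
  shows "integral {0..t} (\<lambda>s. \<bar>pdev s (Suc i)\<bar>)
           \<le> mass0 + 1 / (1 - lam) + lam * integral {0..t} (\<lambda>s. dev s i)"
proof -
  have "(\<lambda>n. (mass0 + (lam + 1) * t) / real (Suc n)) \<longlonglongrightarrow> 0"
    using LIMSEQ_Suc[OF lim_const_over_n] .
  moreover have "(\<lambda>n. lam ^ n) \<longlonglongrightarrow> 0"
    using lam_pos lam_less_1 by (intro LIMSEQ_power_zero) simp
  ultimately have "(\<lambda>n. mass0 + 1 / (1 - lam) + lam * integral {0..t} (\<lambda>s. dev s i)
        + t * (d * ((mass0 + (lam + 1) * t) / Suc n + lam ^ n)))
      \<longlonglongrightarrow> mass0 + 1 / (1 - lam) + lam * integral {0..t} (\<lambda>s. dev s i) + t * (real d * (0 + 0))"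
    by (intro tendsto_add tendsto_mult tendsto_const)
  then have "integral {0..t} (\<lambda>s. \<bar>pdev s (Suc i)\<bar>)
      \<le> mass0 + 1 / (1 - lam) + lam * integral {0..t} (\<lambda>s. dev s i) + t * (real d * (0 + 0))"
    by (rule LIMSEQ_le_const) (use abs_pdev_integral_le_telescoped[OF assms] in auto)
  then show ?thesis by simp
qed

lemma dev_integral_bounded: "\<exists>B. \<forall>t\<ge>0. integral {0..t} (\<lambda>s. dev s i) \<le> B"
proof (induction i)
  case 0
  have "integral {0..t} (\<lambda>s. dev s 0) = 0" if "t \<ge> 0" for t
    using integral_cong[of "{0..t}" "\<lambda>s. dev s 0" "\<lambda>_. 0"] v_zero by (simp add: dev_def)
  then show ?case by auto
next
  case (Suc i)
  then obtain B where B: "\<And>t. t \<ge> 0 \<Longrightarrow> integral {0..t} (\<lambda>s. dev s i) \<le> B" by blast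
  define c where "c = (1 - vs (Suc i)) ^ (d - 1)"
  have "0 < c" unfolding c_def using vs_Suc_less_one[of i] by simp
  have "c * integral {0..t} (\<lambda>s. dev s (Suc i)) \<le> mass0 + 1 / (1 - lam) + lam * B"
    if "t \<ge> 0" for t
  proof -
    have "c * integral {0..t} (\<lambda>s. dev s (Suc i)) = integral {0..t} (\<lambda>s. c * dev s (Suc i))"
      by simp
    also have "\<dots> \<le> integral {0..t} (\<lambda>s. \<bar>pdev s (Suc i)\<bar>)"
    proof (rule integral_le)
      show "(\<lambda>s. c * dev s (Suc i)) integrable_on {0..t}" "(\<lambda>s. \<bar>pdev s (Suc i)\<bar>) integrable_on {0..t}"
        by (auto intro!: continuous_on_atLeast_integrable continuous_intros)
    qed (use abs_pdev_ge in \<open>auto simp: c_def\<close>)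
    also have "\<dots> \<le> mass0 + 1 / (1 - lam) + lam * integral {0..t} (\<lambda>s. dev s i)"
      by (rule abs_pdev_integral_le[OF that])
    also have "\<dots> \<le> mass0 + 1 / (1 - lam) + lam * B"
      using B[OF that] lam_pos by simp
    finally show ?thesis .
  qed
  then have "integral {0..t} (\<lambda>s. dev s (Suc i)) \<le> (mass0 + 1 / (1 - lam) + lam * B) / c"
    if "t \<ge> 0" for t
    using that \<open>0 < c\<close> by (simp add: field_simps)
  then show ?case by blast
qed

theorem v_tendsto_vstar: "((\<lambda>t. v t k) \<longlongrightarrow> vs k) at_top"
proof -
  obtain B where "\<And>t. t \<ge> 0 \<Longrightarrow> integral {0..t} (\<lambda>s. dev s k) \<le> B"
    using dev_integral_bounded by blast
  then have "((\<lambda>t. dev t k) \<longlongrightarrow> 0) at_top"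
    using lam_pos dev_lipschitz
    by (intro tendsto_zero_if_lipschitz_integral_bounded[of "lam + 1"]) (auto simp: dev_def)
  then show ?thesis
    unfolding dev_def tendsto_rabs_zero_iff by (simp add: Lim_null[symmetric])
qed

end

theorem lemma3p1:
  fixes d :: nat and lam :: real and v :: "real \<Rightarrow> nat \<Rightarrow> real"
  assumes "d \<ge> 1" and "0 < lam" and "lam < 1"
    and "\<And>t. t \<ge> 0 \<Longrightarrow> v t 0 = 1"
    and "\<And>t. t \<ge> 0 \<Longrightarrow> v t \<in> seqU"
    and "\<And>t k. t \<ge> 0 \<Longrightarrow> k \<ge> 1 \<Longrightarrow>
           ((\<lambda>s. v s k) has_real_derivative
              (lam * (v t (k - 1) - v t k) - (1 - v t (k + 1)) ^ d + (1 - v t k) ^ d))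
           (at t within {0..})"
    and "v 0 \<in> seqUo"
  shows "\<forall>k\<ge>1. ((\<lambda>t. v t k) \<longlongrightarrow> vstar d lam k) at_top"
proof -
  interpret mean_field_solution d lam v
    using assms by unfold_locales
  show ?thesis using v_tendsto_vstar by blast
qed

end
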